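(* Let $\mathrm{IC}(\mathbf{a}_0,\dots,\mathbf{a}_{n-1})$ be an interval circulant matrix with $\hat A\ne0$. Then for every $A\in\mathrm{IC}(\mathbf{a}_0,\dots,\mathbf{a}_{n-1})$ we have $A/\lambda(A)\le\hat A/\lambda(\hat A)$ entrywise.
   Context: $\mathrm{Circ}(a_0,\dots,a_{n-1})$ is the matrix with $A_{i,j}=a_t$, $t\in\{0,\dots,n-1\}$, $t\equiv j-i\pmod n$. $\mathrm{IC}(\mathbf{a}_0,\dots,\mathbf{a}_{n-1})$ is the set of all $\mathrm{Circ}(a_0,\dots,a_{n-1})$ with $a_t\in\mathbf{a}_t$, where each $\mathbf{a}_t\subseteq\mathbb{R}_+$ is a nonempty interval of one of the forms $[\underline{a}_t,\overline{a}_t]$, $(\underline{a}_t,\overline{a}_t)$, $(\underline{a}_t,\overline{a}_t]$, $[\underline{a}_t,\overline{a}_t)$. $\underline{a}=\max_k\underline{a}_k$, $\hat A=\mathrm{Circ}(\hat a_0,\dots,\hat a_{n-1})$, $\hat a_i=\min\{\underline a,\overline a_i\}$. $\lambda(\cdot)$ is the greatest max-algebraic eigenvalue (maximum cycle geometric mean), which for a circulant equals its largest entry. *)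

theory Defs
  imports Complex_Main
begin

text \<open>n x n real matrices are represented as functions nat => nat => real,
  only the entries with indices < n being relevant.\<close>

definition circ :: "nat \<Rightarrow> (nat \<Rightarrow> real) \<Rightarrow> (nat \<Rightarrow> nat \<Rightarrow> real)" where
  "circ n a = (\<lambda>i j. a ((j + n - i) mod n))"

definition in_ivl :: "real \<Rightarrow> real \<Rightarrow> bool \<Rightarrow> bool \<Rightarrow> real \<Rightarrow> bool" where
  "in_ivl lo hi lc hc x \<longleftrightarrow>
     (if lc then lo \<le> x else lo < x) \<and> (if hc then x \<le> hi else x < hi)"

definition valid_ivl :: "real \<Rightarrow> real \<Rightarrow> bool \<Rightarrow> bool \<Rightarrow> bool" where
  "valid_ivl lo hi lc hc \<longleftrightarrow> 0 \<le> lo \<and> (\<exists>x. in_ivl lo hi lc hc x)"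

definition IC :: "nat \<Rightarrow> (nat \<Rightarrow> real) \<Rightarrow> (nat \<Rightarrow> real) \<Rightarrow> (nat \<Rightarrow> bool) \<Rightarrow> (nat \<Rightarrow> bool)
                  \<Rightarrow> (nat \<Rightarrow> nat \<Rightarrow> real) set" where
  "IC n lo hi lc hc = {circ n a | a. \<forall>t<n. in_ivl (lo t) (hi t) (lc t) (hc t) (a t)}"

definition lower_max :: "nat \<Rightarrow> (nat \<Rightarrow> real) \<Rightarrow> real" where
  "lower_max n lo = Max (lo ` {..<n})"

definition hatA :: "nat \<Rightarrow> (nat \<Rightarrow> real) \<Rightarrow> (nat \<Rightarrow> real) \<Rightarrow> (nat \<Rightarrow> nat \<Rightarrow> real)" where
  "hatA n lo hi = circ n (\<lambda>i. min (lower_max n lo) (hi i))"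

definition cycle_weight :: "(nat \<Rightarrow> nat \<Rightarrow> real) \<Rightarrow> nat list \<Rightarrow> real" where
  "cycle_weight A xs = (\<Prod>l<length xs. A (xs ! l) (xs ! ((l + 1) mod length xs)))"

text \<open>Max-algebraic principal eigenvalue = maximum cycle geometric mean
  (cycles of length at most n suffice).\<close>
definition mcgm :: "nat \<Rightarrow> (nat \<Rightarrow> nat \<Rightarrow> real) \<Rightarrow> real" where
  "mcgm n A = Max {root (length xs) (cycle_weight A xs) | xs.
                     1 \<le> length xs \<and> length xs \<le> n \<and> set xs \<subseteq> {..<n}}"

end

theory Submission
  imports Defs
begin

text \<open>The maximal lower endpoint \<open>L\<close> is attained by some parameter of every
  \<open>A \<in> IC\<close>, and a circulant cycles through its parameter \<open>a t\<close> along
  \<open>0, t, 2t, \<dots>\<close>, so \<open>\<lambda>(A) \<ge> L\<close>; meanwhile \<open>\<lambda>(\<hat>A) = L\<close>. Hence an entry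
  \<open>a \<le> hi\<close> of \<open>A\<close> satisfies \<open>a/\<lambda>(A) \<le> min 1 (hi/L) = \<hat>a/L\<close>.\<close>

lemma in_ivl_bounds: "in_ivl lo hi lc hc x \<Longrightarrow> lo \<le> x \<and> x \<le> hi"
  unfolding in_ivl_def by (auto split: if_splits)

lemma valid_ivl_bounds: "valid_ivl lo hi lc hc \<Longrightarrow> 0 \<le> lo \<and> lo \<le> hi"
  unfolding valid_ivl_def by (auto dest: in_ivl_bounds)

lemma circ_eq_param: "circ n a i j = a ((j + n - i) mod n)"
  by (simp add: circ_def)

lemma circ_in_params: "0 < n \<Longrightarrow> circ n a i j \<in> a ` {..<n}"
  by (simp add: circ_def)

lemma circ_mod_add:
  assumes "0 < n" "t < n"
  shows "circ n a (x mod n) ((x + t) mod n) = a t"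
proof -
  let ?r = "x mod n"
  have r: "?r < n" using assms(1) by simp
  have "(x + t) mod n = (?r + t) mod n" by (simp add: mod_add_left_eq)
  moreover have "((?r + t) mod n + n - ?r) mod n = t"
  proof (cases "?r + t < n")
    case True
    then show ?thesis using assms(2) by simp
  next
    case False
    moreover have "?r + t - n < n" using r assms(2) by linarith
    ultimately have "(?r + t) mod n = ?r + t - n" by (simp add: le_mod_geq)
    moreover have "?r + t - n + n - ?r = t" using False by linarith
    ultimately show ?thesis using assms(2) by simp
  qed
  ultimately show ?thesis by (simp add: circ_def)
qed

definition cycle_means :: "nat \<Rightarrow> (nat \<Rightarrow> nat \<Rightarrow> real) \<Rightarrow> real set" where
  "cycle_means n A = {root (length xs) (cycle_weight A xs) | xs.
                        1 \<le> length xs \<and> length xs \<le> n \<and> set xs \<subseteq> {..<n}}"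

lemma mcgm_eq_Max_cycle_means: "mcgm n A = Max (cycle_means n A)"
  by (simp add: mcgm_def cycle_means_def)

lemma finite_cycle_means: "finite (cycle_means n A)"
proof -
  have "finite {xs. set xs \<subseteq> {..<n} \<and> length xs \<le> n}"
    by (rule finite_lists_length_le) simp
  then show ?thesis
    unfolding cycle_means_def by (rule rev_finite_subset[OF finite_imageI]) auto
qed

lemma cycle_means_nonempty: "0 < n \<Longrightarrow> cycle_means n A \<noteq> {}"
  unfolding cycle_means_def by (auto intro!: exI[of _ "[0]"])

lemma cycle_weight_circ_step:
  assumes "0 < n" "t < n"
  shows "cycle_weight (circ n a) (map (\<lambda>k. k * t mod n) [0..<n]) = a t ^ n"
proof -
  let ?xs = "map (\<lambda>k. k * t mod n) [0..<n]"
  have "circ n a (?xs ! l) (?xs ! ((l + 1) mod n)) = a t" if "l < n" for l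
  proof -
    have "?xs ! ((l + 1) mod n) = (l * t + t) mod n"
      using assms(1) by (simp add: mod_mult_left_eq add.commute)
    then show ?thesis using that circ_mod_add[OF assms, of a "l * t"] by simp
  qed
  then show ?thesis unfolding cycle_weight_def by simp
qed

lemma circ_param_le_mcgm:
  assumes "0 < n" "t < n" "0 \<le> a t"
  shows "a t \<le> mcgm n (circ n a)"
proof -
  let ?xs = "map (\<lambda>k. k * t mod n) [0..<n]"
  have "root n (a t ^ n) = a t" using assms by (simp add: real_root_power_cancel)
  then have "a t \<in> cycle_means n (circ n a)"
    using cycle_weight_circ_step[OF assms(1,2)] assms(1)
    unfolding cycle_means_def by (auto intro!: exI[of _ ?xs])
  then show ?thesis
    unfolding mcgm_eq_Max_cycle_means by (rule Max_ge[OF finite_cycle_means])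
qed

lemma cycle_mean_le:
  assumes "\<And>i j. 0 \<le> B i j \<and> B i j \<le> M" "0 < length xs"
  shows "root (length xs) (cycle_weight B xs) \<le> M"
proof -
  have "cycle_weight B xs \<le> (\<Prod>l<length xs. M)"
    unfolding cycle_weight_def using assms(1) by (intro prod_mono) auto
  then have "cycle_weight B xs \<le> M ^ length xs" by simp
  moreover have "0 \<le> M" using assms(1)[of 0 0] by linarith
  ultimately have "root (length xs) (cycle_weight B xs) \<le> root (length xs) (M ^ length xs)"
    using assms(2) by (intro real_root_le_mono) auto
  also have "\<dots> = M" using assms(2) \<open>0 \<le> M\<close> by (intro real_root_power_cancel) auto
  finally show ?thesis .
qed

lemma mcgm_circ_eq_Max:
  assumes n: "0 < n" and nonneg: "\<And>t. t < n \<Longrightarrow> 0 \<le> a t"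
  shows "mcgm n (circ n a) = Max (a ` {..<n})"
proof (rule antisym)
  let ?M = "Max (a ` {..<n})"
  have "0 \<le> circ n a i j \<and> circ n a i j \<le> ?M" for i j
    using circ_in_params[OF n, of a i j] nonneg by auto
  then have "x \<le> ?M" if "x \<in> cycle_means n (circ n a)" for x
    using that cycle_mean_le[of "circ n a" ?M] unfolding cycle_means_def by (auto simp: Suc_le_eq)
  then show "mcgm n (circ n a) \<le> ?M"
    unfolding mcgm_eq_Max_cycle_means
    using finite_cycle_means cycle_means_nonempty[OF n] by simp
  have "a t \<le> mcgm n (circ n a)" if "t < n" for t
    using circ_param_le_mcgm[OF n that] nonneg[OF that] .
  then show "?M \<le> mcgm n (circ n a)"
    using n by (intro Max.boundedI) auto
qed

lemma lower_max_attained: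
  assumes "0 < n"
  shows "\<exists>k<n. lo k = lower_max n lo"
proof -
  have "Max (lo ` {..<n}) \<in> lo ` {..<n}" using assms by (intro Max_in) auto
  then show ?thesis unfolding lower_max_def by auto
qed

lemma le_lower_max: "t < n \<Longrightarrow> lo t \<le> lower_max n lo"
  unfolding lower_max_def by simp

lemma mcgm_hatA:
  assumes n: "0 < n" and bounds: "\<And>t. t < n \<Longrightarrow> 0 \<le> lo t \<and> lo t \<le> hi t"
  shows "mcgm n (hatA n lo hi) = lower_max n lo"
proof -
  let ?L = "lower_max n lo"
  obtain k where k: "k < n" "lo k = ?L" using lower_max_attained[OF n] by blast
  have "min ?L (hi k) = ?L" using k bounds[OF k(1)] by simp
  then have "Max ((\<lambda>t. min ?L (hi t)) ` {..<n}) = ?L"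
    using k(1) by (intro Max_eqI) (auto intro: rev_image_eqI[of k])
  moreover have "0 \<le> min ?L (hi t)" if "t < n" for t
    using bounds[OF that] bounds[OF k(1)] k le_lower_max[OF that, of lo] by simp
  ultimately show ?thesis
    unfolding hatA_def by (simp add: mcgm_circ_eq_Max[OF n])
qed

lemma lower_max_pos:
  assumes bounds: "\<And>t. t < n \<Longrightarrow> 0 \<le> lo t \<and> lo t \<le> hi t"
    and nonzero: "\<exists>i<n. \<exists>j<n. hatA n lo hi i j \<noteq> 0"
  shows "0 < lower_max n lo"
proof -
  let ?L = "lower_max n lo"
  obtain i j where "i < n" and ij: "hatA n lo hi i j \<noteq> 0" using nonzero by blast
  then have n: "0 < n" by simp
  obtain s where "s < n" and s: "hatA n lo hi i j = min ?L (hi s)"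
    using circ_in_params[OF n] unfolding hatA_def by blast
  obtain k where "k < n" "lo k = ?L" using lower_max_attained[OF n] by blast
  then have "0 \<le> ?L" using bounds by metis
  moreover have "?L \<noteq> 0" using ij s bounds[OF \<open>s < n\<close>] by auto
  ultimately show ?thesis by simp
qed

lemma divide_le_min_divide:
  fixes x h m L :: real
  assumes "0 \<le> x" "x \<le> h" "x \<le> m" "0 < L" "L \<le> m"
  shows "x / m \<le> min L h / L"
proof (cases "L \<le> h")
  case True
  then show ?thesis using assms by simp
next
  case False
  have "x / m \<le> h / m" using assms by (simp add: divide_right_mono)
  also have "\<dots> \<le> h / L" using assms by (intro divide_left_mono) auto
  finally show ?thesis using False by simp
qed

theorem lemma4:
  fixes n :: nat and lo hi :: "nat \<Rightarrow> real" and lc hc :: "nat \<Rightarrow> bool"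
    and A :: "nat \<Rightarrow> nat \<Rightarrow> real"
  assumes ivls: "\<forall>t<n. valid_ivl (lo t) (hi t) (lc t) (hc t)"
    and nonzero: "\<exists>i<n. \<exists>j<n. hatA n lo hi i j \<noteq> 0"
    and A: "A \<in> IC n lo hi lc hc"
  shows "\<forall>i<n. \<forall>j<n. A i j / mcgm n A \<le> hatA n lo hi i j / mcgm n (hatA n lo hi)"
proof (intro allI impI)
  fix i j assume "i < n" "j < n"
  then have n: "0 < n" by simp
  let ?L = "lower_max n lo"
  obtain a where Aa: "A = circ n a" and a: "\<forall>t<n. in_ivl (lo t) (hi t) (lc t) (hc t) (a t)"
    using A unfolding IC_def by blast
  have lo_hi: "0 \<le> lo t \<and> lo t \<le> hi t" if "t < n" for t
    using ivls that valid_ivl_bounds by blast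
  have a_bounds: "lo t \<le> a t \<and> a t \<le> hi t" if "t < n" for t
    using a that in_ivl_bounds by blast
  obtain k where k: "k < n" "lo k = ?L" using lower_max_attained[OF n] by blast
  have L_pos: "0 < ?L" using lower_max_pos[OF lo_hi nonzero] by blast
  define t where "t = (j + n - i) mod n"
  have t: "t < n" using n by (simp add: t_def)
  have "a t \<le> mcgm n A"
    using circ_param_le_mcgm[OF n t, of a] a_bounds[OF t] lo_hi[OF t] Aa by simp
  moreover have "?L \<le> mcgm n A"
    using circ_param_le_mcgm[OF n k(1), of a] a_bounds[OF k(1)] lo_hi[OF k(1)] k(2) Aa by simp
  moreover have "A i j = a t" and "hatA n lo hi i j = min ?L (hi t)"
    by (simp_all add: Aa hatA_def circ_eq_param t_def)
  ultimately show "A i j / mcgm n A \<le> hatA n lo hi i j / mcgm n (hatA n lo hi)"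
    using divide_le_min_divide[OF _ _ _ L_pos] a_bounds[OF t] lo_hi[OF t]
    by (simp add: mcgm_hatA[OF n lo_hi])
qed

end
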